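(* Let $(X,d)$ be a compact metric space, $f_{1,\infty}=(f_n)_{n=1}^\infty$ a sequence of continuous maps $f_n:X\to X$, and $(p_k)_{k=1}^\infty$ a sequence of positive integers. Let $(A_i)_{i=0}^\infty$ and $(B_i)_{i=0}^\infty$ be decreasing sequences of compact subsets of $X$ with $\bigcap_{i=0}^\infty A_i=\{a\}$ and $\bigcap_{i=0}^\infty B_i=\{b\}$, where $a\neq b$. Suppose that for every choice $c=(C_k)_k$ with $C_k\in\{A_k,B_k\}$ for each $k$, there exists $x_c\in X$ such that $f_1^{p_k}(x_c)\in C_k$ for all $k\ge 1$. Then $f_{1,\infty}$ is Li-Yorke chaotic.
   Context: For $n\in\mathbb{N}$, $f_1^n=f_n\circ\cdots\circ f_1$. The system $f_{1,\infty}$ is Li-Yorke chaotic if there is an uncountable set $S\subseteq X$ such that for all distinct $x,y\in S$: $\liminf_{n\to\infty}d(f_1^n(x),f_1^n(y))=0$ and $\limsup_{n\to\infty}d(f_1^n(x),f_1^n(y))>0$. *)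

theory Defs
  imports "HOL-Analysis.Analysis" "HOL-Library.Liminf_Limsup"
begin

text \<open>Non-autonomous iteration: the maps are indexed from 1 (f 0 is unused);
  comp_iter f n = f n o ... o f 1, and comp_iter f 0 = id.\<close>
fun comp_iter :: "(nat \<Rightarrow> 'a \<Rightarrow> 'a) \<Rightarrow> nat \<Rightarrow> 'a \<Rightarrow> 'a" where
  "comp_iter f 0 = id"
| "comp_iter f (Suc n) = f (Suc n) \<circ> comp_iter f n"

definition li_yorke_chaotic :: "'a::metric_space set \<Rightarrow> (nat \<Rightarrow> 'a \<Rightarrow> 'a) \<Rightarrow> bool" where
  "li_yorke_chaotic X f \<longleftrightarrow>
     (\<exists>S. S \<subseteq> X \<and> uncountable S \<and>
        (\<forall>x\<in>S. \<forall>y\<in>S. x \<noteq> y \<longrightarrow>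
           liminf (\<lambda>n. ereal (dist (comp_iter f n x) (comp_iter f n y))) = 0 \<and>
           limsup (\<lambda>n. ereal (dist (comp_iter f n x) (comp_iter f n y))) > 0))"

end

theory Submission
  imports Defs "HOL-Library.Nat_Bijection"
begin

text \<open>Code each \<open>s \<subseteq> \<nat>\<close> into an itinerary that visits \<open>A k\<close> at every even \<open>k\<close> and, along
  infinitely many odd \<open>k\<close>, records for each \<open>n\<close> whether \<open>n \<in> s\<close>. The resulting points \<open>x s\<close> form
  an uncountable scrambled set: any two are frequently together in the small sets \<open>A k\<close>, and two
  distinct ones are frequently split between \<open>A k \<approx> a\<close> and \<open>B k \<approx> b\<close>. Because \<open>A k\<close> and \<open>B k\<close>
  shrink to distinct points, realisability of every itinerary forces \<open>p k \<rightarrow> \<infinity>\<close>, which transfers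
  these recurrences from the sampled times to the full orbits.\<close>

lemma decseq_compact_eventually_subset_open:
  fixes A :: "nat \<Rightarrow> 'a::t2_space set"
  assumes "decseq A" "\<And>i. compact (A i)" "open U" "(\<Inter>i. A i) \<subseteq> U"
  shows "\<forall>\<^sub>F k in sequentially. A k \<subseteq> U"
proof -
  have "\<exists>k. A k \<subseteq> U"
  proof (rule ccontr)
    assume none: "\<nexists>k. A k \<subseteq> U"
    have "A 0 \<inter> (\<Inter>k. A k - U) \<noteq> {}"
    proof (rule compact_imp_fip_image)
      fix I :: "nat set" assume "finite I"
      then have "\<forall>i\<in>I. A (Max (insert 0 I)) \<subseteq> A i"
        using \<open>decseq A\<close> by (simp add: decseqD)
      moreover have "A (Max (insert 0 I)) \<subseteq> A 0"
        using \<open>decseq A\<close> by (simp add: decseqD)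
      ultimately show "A 0 \<inter> (\<Inter>i\<in>I. A i - U) \<noteq> {}"
        using none by blast
    qed (use assms in \<open>auto intro: compact_imp_closed\<close>)
    then show False
      using assms(4) by blast
  qed
  then obtain k where "A k \<subseteq> U" ..
  then show ?thesis
    unfolding eventually_sequentially using decseqD[OF \<open>decseq A\<close>] by blast
qed

lemma frequently_dist_less_if_frequently_in_shrinking:
  fixes A :: "nat \<Rightarrow> 'a::metric_space set"
  assumes "decseq A" "\<And>i. compact (A i)" "(\<Inter>i. A i) = {a}" "e > 0"
    and "\<exists>\<^sub>F k in sequentially. u k \<in> A k \<and> v k \<in> A k"
  shows "\<exists>\<^sub>F k in sequentially. dist (u k) (v k) < e"
proof -
  have "\<forall>\<^sub>F k in sequentially. A k \<subseteq> ball a (e / 2)"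
    using assms(1-4) by (intro decseq_compact_eventually_subset_open) auto
  with assms(5) show ?thesis
    by (rule frequently_rev_mp[OF _ eventually_mono])
      (metis dist_commute dist_triangle_half_l mem_ball subsetD)
qed

lemma frequently_dist_greater_if_frequently_split:
  fixes A B :: "nat \<Rightarrow> 'a::metric_space set"
  assumes "decseq A" "\<And>i. compact (A i)" "(\<Inter>i. A i) = {a}"
    and "decseq B" "\<And>i. compact (B i)" "(\<Inter>i. B i) = {b}" "a \<noteq> b"
    and "\<exists>\<^sub>F k in sequentially. u k \<in> A k \<and> v k \<in> B k \<or> u k \<in> B k \<and> v k \<in> A k"
  shows "\<exists>\<^sub>F k in sequentially. dist a b / 3 < dist (u k) (v k)"
proof -
  let ?\<delta> = "dist a b / 3"
  have far: "?\<delta> < dist x y" if "x \<in> ball a ?\<delta>" "y \<in> ball b ?\<delta>" for x y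
    using that dist_triangle[of a b x] dist_triangle[of x b y] by (simp add: dist_commute)
  have "\<forall>\<^sub>F k in sequentially. A k \<subseteq> ball a ?\<delta>"
    using assms(1-3,7) by (intro decseq_compact_eventually_subset_open) auto
  moreover have "\<forall>\<^sub>F k in sequentially. B k \<subseteq> ball b ?\<delta>"
    using assms(4-7) by (intro decseq_compact_eventually_subset_open) auto
  ultimately have "\<forall>\<^sub>F k in sequentially. A k \<subseteq> ball a ?\<delta> \<and> B k \<subseteq> ball b ?\<delta>"
    by (rule eventually_conj)
  with assms(8) show ?thesis
    by (rule frequently_rev_mp[OF _ eventually_mono]) (auto dest!: far simp: dist_commute)
qed

lemma frequently_filterlim_at_top:
  fixes p :: "nat \<Rightarrow> nat"
  assumes "filterlim p at_top sequentially" "\<exists>\<^sub>F k in sequentially. P (p k)"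
  shows "\<exists>\<^sub>F n in sequentially. P n"
proof -
  have "\<exists>\<^sub>F n in filtermap p sequentially. P n"
    using assms(2) by (simp add: frequently_filtermap)
  moreover have "filtermap p sequentially \<le> sequentially"
    using assms(1) by (simp add: filterlim_def)
  ultimately show ?thesis
    unfolding frequently_def by (blast dest: filter_leD)
qed

lemma Liminf_ereal_eq_0_if_frequently_less:
  fixes u :: "nat \<Rightarrow> real"
  assumes "\<And>n. 0 \<le> u n" "\<And>e. e > 0 \<Longrightarrow> \<exists>\<^sub>F n in sequentially. u n < e"
  shows "liminf (\<lambda>n. ereal (u n)) = 0"
proof (rule antisym)
  show "liminf (\<lambda>n. ereal (u n)) \<le> 0"
  proof (rule ccontr)
    assume "\<not> liminf (\<lambda>n. ereal (u n)) \<le> 0"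
    then obtain e where e: "0 < ereal e" "ereal e < liminf (\<lambda>n. ereal (u n))"
      using ereal_dense2[of 0] by (auto simp: not_le)
    have "\<exists>\<^sub>F n in sequentially. u n < e"
      using assms(2) e(1) by simp
    moreover have "\<forall>\<^sub>F n in sequentially. ereal e < ereal (u n)"
      using e(2) by (rule less_LiminfD)
    ultimately show False
      using frequently_ex[OF frequently_eventually_conj] by fastforce
  qed
  show "0 \<le> liminf (\<lambda>n. ereal (u n))"
    using assms(1) by (intro Liminf_bounded) simp
qed

lemma Limsup_ereal_pos_if_frequently_greater:
  fixes u :: "nat \<Rightarrow> real"
  assumes "\<delta> > 0" "\<exists>\<^sub>F n in sequentially. \<delta> < u n"
  shows "limsup (\<lambda>n. ereal (u n)) > 0"
proof (rule ccontr)
  assume "\<not> limsup (\<lambda>n. ereal (u n)) > 0"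
  then have "limsup (\<lambda>n. ereal (u n)) \<le> 0"
    by simp
  also have "0 < ereal \<delta>"
    using assms(1) by simp
  finally have "\<forall>\<^sub>F n in sequentially. ereal (u n) < ereal \<delta>"
    by (rule Limsup_lessD)
  then have "\<forall>\<^sub>F n in sequentially. u n < \<delta>"
    by simp
  from frequently_ex[OF frequently_eventually_conj[OF assms(2) this]] show False
    by auto
qed

lemma uncountable_UNIV_nat_set: "uncountable (UNIV :: nat set set)"
proof
  assume "countable (UNIV :: nat set set)"
  then obtain g :: "nat \<Rightarrow> nat set" where "range g = UNIV"
    by (metis uncountable_def UNIV_not_empty)
  then show False
    using Cantors_theorem[of "UNIV :: nat set"] by simp
qed

lemma li_yorke_chaoticI:
  fixes x :: "nat set \<Rightarrow> 'a::metric_space"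
  assumes "range x \<subseteq> X" "\<delta> > 0"
    and "\<And>s t e. e > 0 \<Longrightarrow>
      \<exists>\<^sub>F n in sequentially. dist (comp_iter f n (x s)) (comp_iter f n (x t)) < e"
    and "\<And>s t. s \<noteq> t \<Longrightarrow>
      \<exists>\<^sub>F n in sequentially. \<delta> < dist (comp_iter f n (x s)) (comp_iter f n (x t))"
  shows "li_yorke_chaotic X f"
  unfolding li_yorke_chaotic_def
proof (intro exI[of _ "range x"] conjI ballI impI)
  have "inj x"
  proof (rule injI, rule ccontr)
    fix s t assume "x s = x t" "s \<noteq> t"
    then show False
      using assms(2) assms(4)[of s t] by simp
  qed
  then show "uncountable (range x)"
    using uncountable_UNIV_nat_set countable_image_inj_on by blast
  fix y z assume "y \<in> range x" "z \<in> range x" "y \<noteq> z"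
  then obtain s t where "y = x s" "z = x t" "s \<noteq> t"
    by blast
  then show "liminf (\<lambda>n. ereal (dist (comp_iter f n y) (comp_iter f n z))) = 0"
    and "limsup (\<lambda>n. ereal (dist (comp_iter f n y) (comp_iter f n z))) > 0"
    using Liminf_ereal_eq_0_if_frequently_less[OF zero_le_dist assms(3)]
      Limsup_ereal_pos_if_frequently_greater[OF assms(2,4)] by simp_all
qed (use assms(1) in simp)

text \<open>An even index lies in every code set; the odd index \<open>2 * prod_encode (n, m) + 1\<close>
  lies in \<open>code_set s\<close> iff \<open>n \<in> s\<close>, so membership of each \<open>n\<close> is recorded infinitely often.\<close>
definition code_set :: "nat set \<Rightarrow> nat set" where
  "code_set s = {k. even k \<or> fst (prod_decode (k div 2)) \<in> s}"

lemma frequently_in_all_code_sets: "\<exists>\<^sub>F k in sequentially. \<forall>s. k \<in> code_set s"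
  unfolding frequently_sequentially
proof
  fix N :: nat
  show "\<exists>k\<ge>N. \<forall>s. k \<in> code_set s"
    by (intro exI[of _ "2 * N"]) (simp add: code_set_def)
qed

lemma frequently_code_sets_differ:
  assumes "s \<noteq> t"
  shows "\<exists>\<^sub>F k in sequentially. (k \<in> code_set s) \<noteq> (k \<in> code_set t)"
proof -
  obtain n where n: "(n \<in> s) \<noteq> (n \<in> t)"
    using assms by blast
  have "\<exists>k\<ge>N. (k \<in> code_set s) \<noteq> (k \<in> code_set t)" for N
  proof (intro exI conjI)
    have "N \<le> prod_encode (n, N)"
      by (rule le_prod_encode_2)
    then show "N \<le> 2 * prod_encode (n, N) + 1"
      by simp
    show "(2 * prod_encode (n, N) + 1 \<in> code_set s) \<noteq> (2 * prod_encode (n, N) + 1 \<in> code_set t)"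
      using n by (simp add: code_set_def)
  qed
  then show ?thesis
    by (simp add: frequently_sequentially)
qed

lemma filterlim_at_top_if_itineraries_realised:
  fixes g :: "nat \<Rightarrow> 'a \<Rightarrow> 'a" and p :: "nat \<Rightarrow> nat"
  assumes "decseq A" "(\<Inter>i. A i) = {a}" "decseq B" "a \<notin> (\<Inter>i. B i)"
    and "\<And>C. (\<forall>k. C k \<in> {A k, B k}) \<Longrightarrow> \<exists>x. \<forall>k\<ge>1. g (p k) x \<in> C k"
  shows "filterlim p at_top sequentially"
proof -
  have "finite {k. p k = m}" for m
  proof (rule ccontr)
    assume "infinite {k. p k = m}"
    then have unbounded: "\<exists>k\<ge>N. p k = m" for N
      by (simp add: infinite_nat_iff_unbounded_le)
    obtain j where "a \<notin> B j"
      using assms(4) by blast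
    obtain k\<^sub>0 where k\<^sub>0: "p k\<^sub>0 = m" "1 \<le> k\<^sub>0" "j \<le> k\<^sub>0"
      using unbounded[of "max 1 j"] by auto
    have "\<forall>k. (if k = k\<^sub>0 then B k else A k) \<in> {A k, B k}"
      by simp
    from assms(5)[OF this] obtain x
      where x: "\<And>k. 1 \<le> k \<Longrightarrow> g (p k) x \<in> (if k = k\<^sub>0 then B k else A k)"
      by blast
    have "g m x \<in> A i" for i
    proof -
      obtain k where k: "p k = m" "Suc k\<^sub>0 \<le> k" "i \<le> k"
        using unbounded[of "max (Suc k\<^sub>0) i"] by auto
      then have "g m x \<in> A k"
        using x[of k] by (simp split: if_splits)
      then show ?thesis
        using decseqD[OF assms(1) k(3)] by blast
    qed
    then have "g m x = a"
      using assms(2) by (metis INT_I singletonD)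
    moreover have "g m x \<in> B j"
      using x[of k\<^sub>0] k\<^sub>0 decseqD[OF assms(3) k\<^sub>0(3)] by auto
    ultimately show False
      using \<open>a \<notin> B j\<close> by simp
  qed
  then have "finite (\<Union>m<Z. {k. p k = m})" for Z
    by blast
  moreover have "{k. \<not> Z \<le> p k} = (\<Union>m<Z. {k. p k = m})" for Z
    by auto
  ultimately show ?thesis
    unfolding filterlim_at_top by (simp add: eventually_cofinite flip: cofinite_eq_sequentially)
qed

lemma li_yorke_chaotic_if_code_set_itineraries:
  fixes x :: "nat set \<Rightarrow> 'a::metric_space"
  assumes "decseq A" "\<And>i. compact (A i)" "(\<Inter>i. A i) = {a}"
    and "decseq B" "\<And>i. compact (B i)" "(\<Inter>i. B i) = {b}" "a \<noteq> b"
    and "filterlim p at_top sequentially" "range x \<subseteq> X"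
    and "\<And>s k. 1 \<le> k \<Longrightarrow> comp_iter f (p k) (x s) \<in> (if k \<in> code_set s then A k else B k)"
  shows "li_yorke_chaotic X f"
proof (rule li_yorke_chaoticI[where \<delta> = "dist a b / 3"])
  let ?u = "\<lambda>s k. comp_iter f (p k) (x s)"
  show "range x \<subseteq> X" "dist a b / 3 > 0"
    using assms(7,9) by simp_all
  fix s t
  show "\<exists>\<^sub>F n in sequentially. dist (comp_iter f n (x s)) (comp_iter f n (x t)) < e"
    if "e > 0" for e
  proof (rule frequently_filterlim_at_top[OF assms(8)])
    have "\<exists>\<^sub>F k in sequentially. ?u s k \<in> A k \<and> ?u t k \<in> A k"
      using frequently_eventually_conj[OF frequently_in_all_code_sets eventually_ge_at_top[of 1]]
      by (rule frequently_elim1) (use assms(10) in fastforce)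
    then show "\<exists>\<^sub>F k in sequentially. dist (?u s k) (?u t k) < e"
      by (rule frequently_dist_less_if_frequently_in_shrinking[OF assms(1-3) that])
  qed
  show "\<exists>\<^sub>F n in sequentially. dist a b / 3 < dist (comp_iter f n (x s)) (comp_iter f n (x t))"
    if "s \<noteq> t"
  proof (rule frequently_filterlim_at_top[OF assms(8)])
    have "\<exists>\<^sub>F k in sequentially. ?u s k \<in> A k \<and> ?u t k \<in> B k \<or> ?u s k \<in> B k \<and> ?u t k \<in> A k"
      using frequently_eventually_conj[OF frequently_code_sets_differ[OF that] eventually_ge_at_top[of 1]]
      by (rule frequently_elim1) (metis assms(10))
    then show "\<exists>\<^sub>F k in sequentially. dist a b / 3 < dist (?u s k) (?u t k)"
      by (rule frequently_dist_greater_if_frequently_split[OF assms(1-7)])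
  qed
qed

theorem mainTheorem6:
  fixes X :: "'a::metric_space set"
    and f :: "nat \<Rightarrow> 'a \<Rightarrow> 'a"
    and p :: "nat \<Rightarrow> nat"
    and A B :: "nat \<Rightarrow> 'a set"
    and a b :: 'a
  assumes "compact X"
    and "\<And>n. n \<ge> 1 \<Longrightarrow> continuous_on X (f n)"
    and "\<And>n. n \<ge> 1 \<Longrightarrow> f n ` X \<subseteq> X"
    and "\<And>k. k \<ge> 1 \<Longrightarrow> p k > 0"
    and "\<And>i. compact (A i)" "\<And>i. A i \<subseteq> X" "\<And>i. A (Suc i) \<subseteq> A i"
    and "\<And>i. compact (B i)" "\<And>i. B i \<subseteq> X" "\<And>i. B (Suc i) \<subseteq> B i"
    and "(\<Inter>i. A i) = {a}" "(\<Inter>i. B i) = {b}" "a \<noteq> b"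
    and "\<And>C. (\<forall>k. C k \<in> {A k, B k}) \<Longrightarrow>
            \<exists>x\<in>X. \<forall>k\<ge>1. comp_iter f (p k) x \<in> C k"
  shows "li_yorke_chaotic X f"
proof -
  have "decseq A" "decseq B"
    using assms(7,10) by (simp_all add: decseq_Suc_iff)
  have "filterlim p at_top sequentially"
    using \<open>decseq A\<close> assms(11) \<open>decseq B\<close>
  proof (rule filterlim_at_top_if_itineraries_realised[where g = "comp_iter f"])
    show "a \<notin> (\<Inter>i. B i)"
      using assms(12,13) by simp
  qed (use assms(14) in blast)
  have "\<forall>s. \<exists>x\<in>X. \<forall>k\<ge>1. comp_iter f (p k) x \<in> (if k \<in> code_set s then A k else B k)"
    using assms(14) by simp
  then obtain x where x: "\<And>s. x s \<in> X"
    "\<And>s k. 1 \<le> k \<Longrightarrow> comp_iter f (p k) (x s) \<in> (if k \<in> code_set s then A k else B k)"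
    by metis
  then have "range x \<subseteq> X"
    by blast
  from li_yorke_chaotic_if_code_set_itineraries[OF \<open>decseq A\<close> assms(5,11) \<open>decseq B\<close> assms(8,12,13)
      \<open>filterlim p at_top sequentially\<close> this x(2)]
  show ?thesis .
qed

end
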